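(* Let $V:S^1\to\mathbb R$ be continuous and odd, and for $D\ge0$ let $c_k=-(2\pi k)^2D+4\pi k v_k$ with $v_k=\int_0^{1/2}V(\theta)\sin(2\pi k\theta)\,d\theta$. (a) If $V>0$ on $\left]0,\tfrac12\right[$, then $c_1>0$ for all sufficiently small $D\ge 0$. (b) Suppose there is $\theta_0\in\left]0,\tfrac12\right[$ such that $V>0$ on $\left]0,\theta_0\right[$, $V(\theta_0)=0$, $V<0$ on $\left]\theta_0,\tfrac12\right[$, and $V(\theta)\ge V(\tfrac12-\theta)$ for all $\theta\in\left]\min(\theta_0,\tfrac12-\theta_0),\tfrac14\right[$. Then $c_2>0$ for all sufficiently small $D\ge0$.
   Context: $S^1=\mathbb R/\mathbb Z$; a function on $S^1$ is identified with a 1-periodic function on $\mathbb R$. The numbers $c_k$ are the eigenvalues of the linearization of the equation $\partial_t f=D\partial_\theta^2 f+\partial_\theta((V*f)f)$, $(V*f)(\theta)=\int_{S^1}V(\theta-\psi)f(\psi)d\psi$, around the constant solution $f\equiv1$. *)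

theory Defs
  imports "HOL-Analysis.Analysis"
begin

text \<open>Functions on the circle R/Z are represented as 1-periodic functions on R.\<close>

definition vcoef :: "(real \<Rightarrow> real) \<Rightarrow> nat \<Rightarrow> real" where
  "vcoef V k = integral {0..1/2} (\<lambda>\<theta>. V \<theta> * sin (2 * pi * real k * \<theta>))"

definition ccoef :: "(real \<Rightarrow> real) \<Rightarrow> real \<Rightarrow> nat \<Rightarrow> real" where
  "ccoef V D k = - ((2 * pi * real k)^2) * D + 4 * pi * real k * vcoef V k"

end

theory Submission
  imports Defs
begin

(* Both parts of the theorem reduce to the positivity of a Fourier-type coefficient v_k:
   since c_k = -(2 pi k)^2 D + 4 pi k v_k is affine in D, v_k > 0 gives c_k > 0 for all
   small D >= 0 (lemma ccoef_pos_for_small_D).  Positivity of v_k is in turn obtained from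
   the fact that a continuous nonnegative integrand which is positive at one point has a
   positive integral (integral_pos_of_continuous).
   (a) For k = 1 the integrand V(t) sin(2 pi t) is nonnegative on [0,1/2] and positive at 1/4.
   (b) For k = 2 we fold [1/4,1/2] onto [0,1/4] via t |-> 1/2 - t (integral_fold_at_midpoint);
   since sin(4 pi (1/2 - t)) = - sin(4 pi t), this gives
       v_2 = integral over [0,1/4] of (V t - V(1/2 - t)) sin(4 pi t).
   The sign hypotheses of (b) make V t - V(1/2 - t) positive on ]0, min(t0, 1/2 - t0)[ and,
   by the comparison hypothesis and continuity, nonnegative on all of [0,1/4]. *)

lemma integral_pos_of_continuous:
  fixes f :: "real \<Rightarrow> real"
  assumes ab: "a < b" and cont: "continuous_on {a..b} f"
    and nonneg: "\<And>x. x \<in> {a..b} \<Longrightarrow> 0 \<le> f x"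
    and x: "x \<in> {a..b}" and pos: "f x > 0"
  shows "integral {a..b} f > 0"
proof -
  have int: "f integrable_on {a..b}" using cont integrable_continuous_real by blast
  have "integral {a..b} f \<ge> 0" using int nonneg by (intro integral_nonneg) auto
  moreover have "integral {a..b} f \<noteq> 0"
  proof
    assume "integral {a..b} f = 0"
    with int have "(f has_integral 0) (cbox a b)"
      by (metis has_integral_integral box_real(2))
    then have "f x = 0"
      by (rule has_integral_0_cbox_imp_0[rotated 2]) (use ab cont nonneg x in auto)
    with pos show False by simp
  qed
  ultimately show ?thesis by simp
qed

text \<open>Since c_k is affine in D with value 4 pi k v_k at D = 0 and negative slope,
  a positive coefficient v_k makes c_k positive for all sufficiently small D \<ge> 0.\<close>
lemma ccoef_pos_for_small_D:
  assumes "vcoef V k > 0" and "k > 0"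
  shows "\<exists>\<epsilon>>0. \<forall>D. 0 \<le> D \<and> D < \<epsilon> \<longrightarrow> ccoef V D k > 0"
proof -
  define A where "A = (2 * pi * real k)^2"
  define B where "B = 4 * pi * real k * vcoef V k"
  have A: "A > 0" and B: "B > 0" using assms by (simp_all add: A_def B_def)
  show ?thesis
  proof (intro exI[of _ "B / A"] conjI allI impI)
    show "B / A > 0" using A B by simp
    fix D assume "0 \<le> D \<and> D < B / A"
    then have "A * D < B" using A by (simp add: pos_less_divide_eq mult.commute)
    then show "ccoef V D k > 0" unfolding ccoef_def A_def B_def by simp
  qed
qed

text \<open>An odd 1-periodic function vanishes at 0 and at 1/2 (the fixed points of
  t \<mapsto> -t on the circle); these are the endpoints of all integrals below.\<close>
lemma odd_periodic_zeros:
  fixes V :: "real \<Rightarrow> real"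
  assumes per: "\<And>\<theta>. V (\<theta> + 1) = V \<theta>" and odd: "\<And>\<theta>. V (- \<theta>) = - V \<theta>"
  shows "V 0 = 0" and "V (1/2) = 0"
  using odd[of 0] odd[of "1/2"] per[of "-1/2"] by simp_all

lemma integral_fold_at_midpoint:
  fixes h :: "real \<Rightarrow> real"
  assumes cont: "continuous_on UNIV h" and c: "0 \<le> c"
  shows "integral {0..2*c} h = integral {0..c} (\<lambda>x. h x + h (2*c - x))"
proof -
  have cont_on: "continuous_on S h" for S using cont continuous_on_subset by blast
  have "integral {c..2*c} h = integral {-(2*c)..-c} (\<lambda>x. h (-x))"
    by (rule Henstock_Kurzweil_Integration.integral_reflect_real[symmetric])
  also have "\<dots> = integral {0 + (-2*c)..c + (-2*c)} (\<lambda>x. h (-x))" by simp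
  also have "\<dots> = integral {0..c} (\<lambda>x. h (2*c - x))"
    by (subst integral_shift_Icc_real[symmetric]) (simp add: o_def)
  finally have reflected: "integral {c..2*c} h = integral {0..c} (\<lambda>x. h (2*c - x))" .
  have "integral {0..2*c} h = integral {0..c} h + integral {c..2*c} h"
    using Henstock_Kurzweil_Integration.integral_combine[where a=0 and c=c and b="2*c" and f=h] integrable_continuous_real[OF cont_on] c by simp
  also have "\<dots> = integral {0..c} (\<lambda>x. h x + h (2*c - x))"
    unfolding reflected
    by (rule integral_add[symmetric])
      (auto intro!: integrable_continuous_real continuous_intros cont_on
         continuous_on_compose2[OF cont])
  finally show ?thesis .
qed

lemma vcoef_1_pos:
  fixes V :: "real \<Rightarrow> real"
  assumes cont: "continuous_on UNIV V"
    and per: "\<And>\<theta>. V (\<theta> + 1) = V \<theta>" and odd: "\<And>\<theta>. V (- \<theta>) = - V \<theta>"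
    and pos: "\<forall>\<theta>\<in>{0<..<1/2}. V \<theta> > 0"
  shows "vcoef V 1 > 0"
  unfolding vcoef_def
proof (rule integral_pos_of_continuous[where x="1/4"])
  show "continuous_on {0..1/2} (\<lambda>\<theta>. V \<theta> * sin (2 * pi * real 1 * \<theta>))"
    by (intro continuous_intros continuous_on_subset[OF cont]) auto
  fix x :: real assume x: "x \<in> {0..1/2}"
  have "sin (2 * pi * x) \<ge> 0" using x by (intro sin_ge_zero) auto
  moreover have "V x \<ge> 0"
  proof (cases "x = 0 \<or> x = 1/2")
    case True then show ?thesis using odd_periodic_zeros[OF per odd] by (metis order_refl)
  next
    case False then show ?thesis using x pos by (simp add: less_imp_le)
  qed
  ultimately show "0 \<le> V x * sin (2 * pi * real 1 * x)" by simp
qed (use pos in auto)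

text \<open>Folding the coefficient v_2 at 1/4: since sin(4 pi (1/2 - t)) = - sin(4 pi t),
  v_2 is the integral over [0,1/4] of the antisymmetrised potential against sin(4 pi t).\<close>
lemma vcoef_2_folded:
  fixes V :: "real \<Rightarrow> real"
  assumes cont: "continuous_on UNIV V"
  shows "vcoef V 2 = integral {0..1/4} (\<lambda>\<theta>. (V \<theta> - V (1/2 - \<theta>)) * sin (4 * pi * \<theta>))"
proof -
  define h where "h = (\<lambda>\<theta>. V \<theta> * sin (2 * pi * real 2 * \<theta>))"
  have "continuous_on UNIV h" unfolding h_def by (intro continuous_intros cont)
  from integral_fold_at_midpoint[OF this, of "1/4"]
  have "vcoef V 2 = integral {0..1/4} (\<lambda>x. h x + h (1/2 - x))"
    by (simp add: vcoef_def h_def)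
  also have "(\<lambda>x. h x + h (1/2 - x)) = (\<lambda>\<theta>. (V \<theta> - V (1/2 - \<theta>)) * sin (4 * pi * \<theta>))"
  proof
    fix x
    have "2 * pi * 2 * (1/2 - x) = - (4 * pi * x) + 2 * pi" by (simp add: algebra_simps)
    then have "sin (2 * pi * 2 * (1/2 - x)) = - sin (4 * pi * x)" by simp
    then show "h x + h (1/2 - x) = (V x - V (1/2 - x)) * sin (4 * pi * x)"
      unfolding h_def by (simp add: algebra_simps)
  qed
  finally show ?thesis .
qed

text \<open>Under the sign pattern of part (b), with m = min t0 (1/2 - t0), the difference
  V t - V(1/2 - t) is positive on ]0,m[: there V t > 0 while 1/2 - t \<in> [t0,1/2[.\<close>
lemma reflected_difference_pos:
  fixes V :: "real \<Rightarrow> real" and t0 :: real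
  assumes t0: "0 < t0" "t0 < 1/2"
    and pos: "\<forall>\<theta>\<in>{0<..<t0}. V \<theta> > 0" and zero: "V t0 = 0"
    and neg: "\<forall>\<theta>\<in>{t0<..<1/2}. V \<theta> < 0"
    and x: "0 < x" "x < min t0 (1/2 - t0)"
  shows "V x - V (1/2 - x) > 0"
proof -
  have "V x > 0" using pos x by auto
  moreover have "V (1/2 - x) \<le> 0"
  proof (cases "1/2 - x = t0")
    case False
    then have "1/2 - x \<in> {t0<..<1/2}" using x by auto
    then show ?thesis using neg by (meson less_imp_le)
  qed (use zero in simp)
  ultimately show ?thesis by simp
qed

text \<open>Part (b): the hypotheses give v_2 > 0.  The folded integrand is nonnegative on
  [0,1/4]: on ]0,m[ by the previous lemma, at m by continuity, on ]m,1/4[ by the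
  comparison hypothesis, and at the endpoints trivially; it is positive at m/2.\<close>
lemma vcoef_2_pos:
  fixes V :: "real \<Rightarrow> real" and t0 :: real
  assumes cont: "continuous_on UNIV V"
    and per: "\<And>\<theta>. V (\<theta> + 1) = V \<theta>" and odd: "\<And>\<theta>. V (- \<theta>) = - V \<theta>"
    and t0: "0 < t0" "t0 < 1/2"
    and pos: "\<forall>\<theta>\<in>{0<..<t0}. V \<theta> > 0" and zero: "V t0 = 0"
    and neg: "\<forall>\<theta>\<in>{t0<..<1/2}. V \<theta> < 0"
    and compare: "\<forall>\<theta>\<in>{min t0 (1/2 - t0)<..<1/4}. V \<theta> \<ge> V (1/2 - \<theta>)"
  shows "vcoef V 2 > 0"
proof -
  define m where "m = min t0 (1/2 - t0)"
  define d where "d = (\<lambda>\<theta>. V \<theta> - V (1/2 - \<theta>))"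
  have m: "0 < m" "m \<le> 1/4" using t0 by (auto simp: m_def min_def)
  have cont_d: "continuous_on S d" for S
    unfolding d_def
    by (intro continuous_intros continuous_on_subset[OF cont]
          continuous_on_compose2[OF cont]) auto
  have d_pos: "d x > 0" if "0 < x" "x < m" for x
    using reflected_difference_pos[OF t0 pos zero neg] that by (simp add: d_def m_def)
  have d_at_m: "d m \<ge> 0"
    by (rule continuous_ge_on_closure[of "{0<..<m}" d m])
      (use m cont_d d_pos in \<open>auto intro: less_imp_le\<close>)
  have d_nonneg: "d x \<ge> 0" if x: "x \<in> {0..1/4}" for x
  proof -
    consider "x = 0" | "0 < x \<and> x < m" | "x = m" | "m < x \<and> x < 1/4" | "x = 1/4"
      using x by force
    then show ?thesis
    proof cases
      case 1 then show ?thesis using odd_periodic_zeros[OF per odd] by (simp add: d_def)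
    next
      case 2 then show ?thesis using d_pos by (simp add: less_imp_le)
    next
      case 3 then show ?thesis using d_at_m by simp
    next
      case 4 then show ?thesis using compare by (auto simp: d_def m_def)
    next
      case 5 then have "1/2 - x = x" by simp
      then show ?thesis unfolding d_def by (metis diff_self order_refl)
    qed
  qed
  have "integral {0..1/4} (\<lambda>\<theta>. d \<theta> * sin (4 * pi * \<theta>)) > 0"
  proof (rule integral_pos_of_continuous[where x="m/2"])
    show "continuous_on {0..1/4} (\<lambda>\<theta>. d \<theta> * sin (4 * pi * \<theta>))"
      by (intro continuous_intros cont_d)
    fix x :: real assume "x \<in> {0..1/4}"
    moreover from this have "sin (4 * pi * x) \<ge> 0" by (intro sin_ge_zero) auto
    ultimately show "0 \<le> d x * sin (4 * pi * x)" using d_nonneg by simp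
  next
    have "sin (4 * pi * (m/2)) > 0" using m by (intro sin_gt_zero) auto
    then show "d (m/2) * sin (4 * pi * (m/2)) > 0" using d_pos m by simp
  qed (use m in auto)
  then show ?thesis using vcoef_2_folded[OF cont] by (simp add: d_def)
qed

theorem mainTheorem3:
  fixes V :: "real \<Rightarrow> real"
  assumes cont: "continuous_on UNIV V"
    and per: "\<And>\<theta>. V (\<theta> + 1) = V \<theta>"
    and odd: "\<And>\<theta>. V (- \<theta>) = - V \<theta>"
  shows "((\<forall>\<theta>\<in>{0<..<1/2}. V \<theta> > 0) \<longrightarrow>
            (\<exists>\<epsilon>>0. \<forall>D. 0 \<le> D \<and> D < \<epsilon> \<longrightarrow> ccoef V D 1 > 0))
       \<and> ((\<exists>\<theta>0\<in>{0<..<1/2}.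
              (\<forall>\<theta>\<in>{0<..<\<theta>0}. V \<theta> > 0) \<and> V \<theta>0 = 0 \<and>
              (\<forall>\<theta>\<in>{\<theta>0<..<1/2}. V \<theta> < 0) \<and>
              (\<forall>\<theta>\<in>{min \<theta>0 (1/2 - \<theta>0)<..<1/4}. V \<theta> \<ge> V (1/2 - \<theta>)))
          \<longrightarrow> (\<exists>\<epsilon>>0. \<forall>D. 0 \<le> D \<and> D < \<epsilon> \<longrightarrow> ccoef V D 2 > 0))"
proof (intro conjI impI)
  assume "\<forall>\<theta>\<in>{0<..<1/2}. V \<theta> > 0"
  then have "vcoef V 1 > 0" by (rule vcoef_1_pos[OF cont per odd])
  then show "\<exists>\<epsilon>>0. \<forall>D. 0 \<le> D \<and> D < \<epsilon> \<longrightarrow> ccoef V D 1 > 0"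
    by (rule ccoef_pos_for_small_D) simp
next
  assume "\<exists>\<theta>0\<in>{0<..<1/2}.
            (\<forall>\<theta>\<in>{0<..<\<theta>0}. V \<theta> > 0) \<and> V \<theta>0 = 0 \<and>
            (\<forall>\<theta>\<in>{\<theta>0<..<1/2}. V \<theta> < 0) \<and>
            (\<forall>\<theta>\<in>{min \<theta>0 (1/2 - \<theta>0)<..<1/4}. V \<theta> \<ge> V (1/2 - \<theta>))"
  then have "vcoef V 2 > 0" using vcoef_2_pos[OF cont per odd] by auto
  then show "\<exists>\<epsilon>>0. \<forall>D. 0 \<le> D \<and> D < \<epsilon> \<longrightarrow> ccoef V D 2 > 0"
    by (rule ccoef_pos_for_small_D) simp
qed

end
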